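(* Let $\mathcal{L}$ be a countable language, let $\phi$ be an $\mathcal{L}_{\omega_1,\omega}$-sentence and let $\alpha<\omega_1$. Assume that for every $\gamma<\alpha$ the set $\Psi_\gamma(\phi)$ is countable (so that $X_\alpha(\phi)$ is a standard Borel space). Then (1) the function $Mod(\phi)\times\omega^{<\omega}\to X_\alpha(\phi)$ given by $(\mathcal{M},\vec a)\mapsto \phi^{\vec a,\mathcal{M}}_\alpha$ is Borel, and (2) $\Psi_\alpha(\phi)$ and $\Phi_\alpha(\phi)$ are $\mathbf{\Sigma}^1_1$ subsets of $X_\alpha(\phi)$.
   Context: $\mathcal{L}_{\omega_1,\omega}$ is the infinitary logic over $\mathcal{L}$ with countable conjunctions/disjunctions and finite quantifier strings. $Mod(\mathcal{L})$ is the set of $\mathcal{L}$-structures with universe $\mathbb{N}$, with the topology whose basic open sets are $\{M\in Mod(\mathcal{L}) \mid M\models\varphi(n_1,\dots,n_m)\}$ for quantifier-free $\varphi$ and $n_1,\dots,n_m\in\mathbb{N}$; it is Polish. For a sentence $\sigma$, $Mod(\sigma)$ is the set of members of $Mod(\mathcal{L})$ satisfying $\sigma$, a standard Borel space with the inherited Borel structure. Elements of $\omega^{<\omega}$ are finite tuples $\vec a$ of elements of $\mathbb{N}$. $\alpha$-types: for a countable structure $\mathcal{M}$ and a finite tuple $\vec a$ from $\mathcal{M}$ (with $\vec x$ a tuple of variables of the same length), define formulas by recursion: $\phi^{\vec a,\mathcal{M}}_0(\vec x)=\bigwedge\{\psi(\vec x)\mid \psi$ atomic or negated atomic, $\mathcal{M}\models\psi(\vec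 a)\}$; $\phi^{\vec a,\mathcal{M}}_{\alpha+1}=\phi^{\vec a,\mathcal{M}}_\alpha\wedge\bigwedge\{\exists\vec y\,\phi^{\vec a\frown\vec b,\mathcal{M}}_\alpha(\vec x,\vec y)\mid \vec b$ a finite tuple from $\mathcal{M}\}\wedge\bigwedge_n\forall y_0\dots y_n\bigvee\{\phi^{\vec a\frown\vec b,\mathcal{M}}_\alpha(\vec x,y_0,\dots,y_n)\mid\vec b\in\mathcal{M}^{n+1}\}$; $\phi^{\vec a,\mathcal{M}}_\lambda=\bigwedge_{\alpha<\lambda}\phi^{\vec a,\mathcal{M}}_\alpha$ for limit $\lambda$. Formulas are compared syntactically. $\Psi_\alpha(\phi)=\{\phi^{\vec a,\mathcal{M}}_\alpha\mid \mathcal{M}$ countable, $\mathcal{M}\models\phi$, $\vec a$ a tuple from $\mathcal{M}\}$ and $\Phi_\alpha(\phi)=\{\phi^{\emptyset,\mathcal{M}}_\alpha\mid \mathcal{M}$ countable, $\mathcal{M}\models\phi\}$. The space $X_\alpha(\phi)$: for $\alpha=0$, $X_0(\phi)=2^A$ where $A$ is the (countable) set of atomic and negated atomic formulas, and $\phi^{\vec a,\mathcal{M}}_0$ is identified with $\{\psi\in A\mid\mathcal{M}\models\psi(\vec a)\}$; for $\alpha=\gamma+1$, $X_\alpha(\phi)=2^{\Psi_\gamma(\phi)}$ and $\phi^{\vec a,\mathcal{M}}_{\gamma+1}$ is identified with $\{\phi^{\vec a\frown\vec b,\mathcal{M}}_\gamma\mid\vec b$ a finite tuple from $\mathcal{M}\}$;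 for $\alpha$ limit, $X_\alpha(\phi)=2^{\bigcup_{\gamma<\alpha}\Psi_\gamma(\phi)}$ and $\phi^{\vec a,\mathcal{M}}_\alpha$ is identified with $\{\phi^{\vec a,\mathcal{M}}_\gamma\mid\gamma<\alpha\}$. Via these identifications $\Psi_\alpha(\phi),\Phi_\alpha(\phi)\subseteq X_\alpha(\phi)$; when the index set is countable, $X_\alpha(\phi)$ carries the product (Cantor) topology and is a standard Borel space. *)

theory Defs
  imports "HOL-Analysis.Analysis" "HOL-Probability.Probability" "HOL-Library.Countable_Set_Type"
begin

record lang =
  fsym :: "nat \<Rightarrow> nat option"   \<comment> \<open>Some n: function symbol of arity n (n = 0: constant)\<close>
  rsym :: "nat \<Rightarrow> nat option"   \<comment> \<open>Some n: relation symbol of arity n\<close>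

datatype trm = Var nat | App nat "trm list"

fun wf_trm :: "lang \<Rightarrow> trm \<Rightarrow> bool" where
  "wf_trm L (Var i) = True"
| "wf_trm L (App f ts) = (fsym L f = Some (length ts) \<and> (\<forall>t\<in>set ts. wf_trm L t))"

fun tvars :: "trm \<Rightarrow> nat set" where
  "tvars (Var i) = {i}"
| "tvars (App f ts) = (\<Union>t\<in>set ts. tvars t)"

datatype form =
    FEq trm trm
  | FRel nat "trm list"
  | FNeg form
  | FConj "form cset"
  | FDisj "form cset"
  | FEx nat form
  | FAll nat form

primrec wf_form :: "lang \<Rightarrow> form \<Rightarrow> bool" where
  "wf_form L (FEq s t) = (wf_trm L s \<and> wf_trm L t)"
| "wf_form L (FRel R ts) = (rsym L R = Some (length ts) \<and> (\<forall>t\<in>set ts. wf_trm L t))"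
| "wf_form L (FNeg p) = wf_form L p"
| "wf_form L (FConj S) = (\<forall>b\<in>rcset (cimage (wf_form L) S). b)"
| "wf_form L (FDisj S) = (\<forall>b\<in>rcset (cimage (wf_form L) S). b)"
| "wf_form L (FEx i p) = wf_form L p"
| "wf_form L (FAll i p) = wf_form L p"

primrec fv :: "form \<Rightarrow> nat set" where
  "fv (FEq s t) = tvars s \<union> tvars t"
| "fv (FRel R ts) = (\<Union>t\<in>set ts. tvars t)"
| "fv (FNeg p) = fv p"
| "fv (FConj S) = \<Union> (rcset (cimage fv S))"
| "fv (FDisj S) = \<Union> (rcset (cimage fv S))"
| "fv (FEx i p) = fv p - {i}"
| "fv (FAll i p) = fv p - {i}"

primrec qf_fin :: "form \<Rightarrow> bool" where
  "qf_fin (FEq s t) = True"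
| "qf_fin (FRel R ts) = True"
| "qf_fin (FNeg p) = qf_fin p"
| "qf_fin (FConj S) = (finite (rcset S) \<and> (\<forall>b\<in>rcset (cimage qf_fin S). b))"
| "qf_fin (FDisj S) = (finite (rcset S) \<and> (\<forall>b\<in>rcset (cimage qf_fin S). b))"
| "qf_fin (FEx i p) = False"
| "qf_fin (FAll i p) = False"

definition is_sentence :: "lang \<Rightarrow> form \<Rightarrow> bool" where
  "is_sentence L p \<longleftrightarrow> wf_form L p \<and> fv p = {}"

definition atomic_L :: "lang \<Rightarrow> form set" where
  "atomic_L L = {FEq s t |s t. wf_trm L s \<and> wf_trm L t}
     \<union> {FRel R ts |R ts. rsym L R = Some (length ts) \<and> (\<forall>t\<in>set ts. wf_trm L t)}"

definition Atoms :: "lang \<Rightarrow> form set" where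
  "Atoms L = atomic_L L \<union> FNeg ` atomic_L L"

record struc =
  univ :: "nat set"
  fint :: "nat \<Rightarrow> nat list \<Rightarrow> nat"
  rint :: "nat \<Rightarrow> nat list \<Rightarrow> bool"

text \<open>L-structures, with a canonical (junk-free) representation outside the intended domain.\<close>
definition is_struc :: "lang \<Rightarrow> struc \<Rightarrow> bool" where
  "is_struc L M \<longleftrightarrow> univ M \<noteq> {}
     \<and> (\<forall>f xs. fsym L f = Some (length xs) \<and> set xs \<subseteq> univ M \<longrightarrow> fint M f xs \<in> univ M)
     \<and> (\<forall>f xs. \<not> (fsym L f = Some (length xs) \<and> set xs \<subseteq> univ M) \<longrightarrow> fint M f xs = 0)
     \<and> (\<forall>R xs. \<not> (rsym L R = Some (length xs) \<and> set xs \<subseteq> univ M) \<longrightarrow> \<not> rint M R xs)"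

fun eval :: "struc \<Rightarrow> (nat \<Rightarrow> nat) \<Rightarrow> trm \<Rightarrow> nat" where
  "eval M v (Var i) = v i"
| "eval M v (App f ts) = fint M f (map (eval M v) ts)"

primrec sat :: "struc \<Rightarrow> form \<Rightarrow> (nat \<Rightarrow> nat) \<Rightarrow> bool" where
  "sat M (FEq s t) = (\<lambda>v. eval M v s = eval M v t)"
| "sat M (FRel R ts) = (\<lambda>v. rint M R (map (eval M v) ts))"
| "sat M (FNeg p) = (\<lambda>v. \<not> sat M p v)"
| "sat M (FConj S) = (\<lambda>v. \<forall>g\<in>rcset (cimage (sat M) S). g v)"
| "sat M (FDisj S) = (\<lambda>v. \<exists>g\<in>rcset (cimage (sat M) S). g v)"
| "sat M (FEx i p) = (\<lambda>v. \<exists>u\<in>univ M. sat M p (v(i := u)))"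
| "sat M (FAll i p) = (\<lambda>v. \<forall>u\<in>univ M. sat M p (v(i := u)))"

definition sat_tuple :: "struc \<Rightarrow> form \<Rightarrow> nat list \<Rightarrow> bool" where
  "sat_tuple M p a = sat M p (\<lambda>i. a ! i)"

definition ModL :: "lang \<Rightarrow> struc set" where
  "ModL L = {M. is_struc L M \<and> univ M = UNIV}"

definition basic_open :: "lang \<Rightarrow> struc set set" where
  "basic_open L = {{M \<in> ModL L. sat_tuple M p ns} |p ns.
      qf_fin p \<and> wf_form L p \<and> fv p \<subseteq> {..<length ns}}"

text \<open>The basis is countable, so the Borel sets of Mod(L) are exactly the
  sigma-algebra generated by the basic open sets.\<close>
definition ModL_M :: "lang \<Rightarrow> struc measure" where
  "ModL_M L = sigma (ModL L) (basic_open L)"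

definition Mod_phi :: "lang \<Rightarrow> form \<Rightarrow> struc set" where
  "Mod_phi L p = {M \<in> ModL L. sat M p (\<lambda>_. 0)}"

definition Mod_phi_M :: "lang \<Rightarrow> form \<Rightarrow> struc measure" where
  "Mod_phi_M L p = restrict_space (ModL_M L) (Mod_phi L p)"

section \<open>Countable ordinals: alpha is the order type of the strict initial
  segment below an element x of a well-order r on a subset of nat\<close>

definition below :: "nat rel \<Rightarrow> nat \<Rightarrow> nat set" where
  "below r x = {y. (y, x) \<in> r \<and> y \<noteq> x}"

definition is_ipred :: "nat rel \<Rightarrow> nat \<Rightarrow> nat \<Rightarrow> bool" where
  "is_ipred r x y \<longleftrightarrow> y \<in> below r x \<and> (\<forall>z\<in>below r x. (z, y) \<in> r)"

fun Exs :: "nat \<Rightarrow> nat \<Rightarrow> form \<Rightarrow> form" where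
  "Exs k 0 p = p"
| "Exs k (Suc m) p = FEx k (Exs (Suc k) m p)"

fun Alls :: "nat \<Rightarrow> nat \<Rightarrow> form \<Rightarrow> form" where
  "Alls k 0 p = p"
| "Alls k (Suc m) p = FAll k (Alls (Suc k) m p)"

definition atoms_true :: "lang \<Rightarrow> struc \<Rightarrow> nat list \<Rightarrow> form set" where
  "atoms_true L M a = {p \<in> Atoms L. fv p \<subseteq> {..<length a} \<and> sat_tuple M p a}"

definition succ_form :: "(struc \<Rightarrow> nat list \<Rightarrow> form) \<Rightarrow> struc \<Rightarrow> nat list \<Rightarrow> form" where
  "succ_form q M a = FConj (acset {
      q M a,
      FConj (acset {Exs (length a) (length b) (q M (a @ b)) |b. set b \<subseteq> univ M}),
      FConj (acset (range (\<lambda>n. Alls (length a) (Suc n)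
         (FDisj (acset {q M (a @ b) |b. length b = Suc n \<and> set b \<subseteq> univ M})))))})"

definition phiF :: "lang \<Rightarrow> nat rel \<Rightarrow> (nat \<Rightarrow> struc \<Rightarrow> nat list \<Rightarrow> form)
    \<Rightarrow> nat \<Rightarrow> struc \<Rightarrow> nat list \<Rightarrow> form" where
  "phiF L r rec x = (\<lambda>M a.
     if below r x = {} then FConj (acset (atoms_true L M a))
     else if (\<exists>y. is_ipred r x y) then succ_form (rec (SOME y. is_ipred r x y)) M a
     else FConj (acset {rec y M a |y. y \<in> below r x}))"

text \<open>phi_type L r x M a is the formula phi^{a,M}_alpha, alpha = order type of below r x.\<close>
definition phi_type :: "lang \<Rightarrow> nat rel \<Rightarrow> nat \<Rightarrow> struc \<Rightarrow> nat list \<Rightarrow> form" where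
  "phi_type L r = wfrec (r - Id) (phiF L r)"

definition Psi :: "lang \<Rightarrow> nat rel \<Rightarrow> nat \<Rightarrow> form \<Rightarrow> form set" where
  "Psi L r x p = {phi_type L r x M a |M a. is_struc L M \<and> sat M p (\<lambda>_. 0) \<and> set a \<subseteq> univ M}"

definition Phi :: "lang \<Rightarrow> nat rel \<Rightarrow> nat \<Rightarrow> form \<Rightarrow> form set" where
  "Phi L r x p = {phi_type L r x M [] |M. is_struc L M \<and> sat M p (\<lambda>_. 0)}"

definition Xindex :: "lang \<Rightarrow> nat rel \<Rightarrow> nat \<Rightarrow> form \<Rightarrow> form set" where
  "Xindex L r x p =
     (if below r x = {} then Atoms L
      else if (\<exists>y. is_ipred r x y) then Psi L r (SOME y. is_ipred r x y) p
      else (\<Union>y\<in>below r x. Psi L r y p))"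

text \<open>2^I with the Borel structure of the Cantor (product) topology, I countable:
  generated by the subbasic clopen sets {S. i \<in> S}.\<close>
definition Xspace :: "lang \<Rightarrow> nat rel \<Rightarrow> nat \<Rightarrow> form \<Rightarrow> form set measure" where
  "Xspace L r x p = sigma (Pow (Xindex L r x p))
      {{S \<in> Pow (Xindex L r x p). i \<in> S} |i. i \<in> Xindex L r x p}"

text \<open>The element of X_alpha identified with phi^{a,M}_alpha.\<close>
definition code :: "lang \<Rightarrow> nat rel \<Rightarrow> nat \<Rightarrow> struc \<Rightarrow> nat list \<Rightarrow> form set" where
  "code L r x M a =
     (if below r x = {} then atoms_true L M a
      else if (\<exists>y. is_ipred r x y) then
        {phi_type L r (SOME y. is_ipred r x y) M (a @ b) |b. set b \<subseteq> univ M}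
      else {phi_type L r y M a |y. y \<in> below r x})"

definition PsiX :: "lang \<Rightarrow> nat rel \<Rightarrow> nat \<Rightarrow> form \<Rightarrow> form set set" where
  "PsiX L r x p = {code L r x M a |M a. is_struc L M \<and> sat M p (\<lambda>_. 0) \<and> set a \<subseteq> univ M}"

definition PhiX :: "lang \<Rightarrow> nat rel \<Rightarrow> nat \<Rightarrow> form \<Rightarrow> form set set" where
  "PhiX L r x p = {code L r x M [] |M. is_struc L M \<and> sat M p (\<lambda>_. 0)}"

definition baire :: "(nat \<Rightarrow> nat) measure" where
  "baire = (\<Pi>\<^sub>M i\<in>(UNIV::nat set). count_space (UNIV::nat set))"

definition analytic :: "'a measure \<Rightarrow> 'a set \<Rightarrow> bool" where
  "analytic X S \<longleftrightarrow> S \<subseteq> space X \<and> (\<exists>B\<in>sets (X \<Otimes>\<^sub>M baire). S = fst ` B)"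

end

theory Submission
  imports Defs
begin

text \<open>
  Membership of a formula \<psi> in the code of \<phi>^{a,M}_\<alpha> is, in the successor case \<alpha> = \<gamma> + 1, the
  statement \<exists>b. \<phi>^{a b,M}_\<gamma> = \<psi>, so everything reduces to showing that every fibre
  {M. \<phi>^{a,M}_\<gamma> = \<psi>} is Borel. This goes by induction on \<gamma>: each stage of the recursion
  collects countably many earlier types into a set and forms its conjunction or disjunction,
  and a countable set of values equals a given set only if that set is countable, in which case
  the equality is a countable Boolean combination of the earlier fibres. The argument only uses
  that atomic satisfaction and the universe depend measurably on the structure, so it applies
  equally to structures coded by points of Baire space; there it shows that the code map is Borel
  on the Borel set of codes of models of \<phi>, and \<Psi>_\<alpha>, \<Phi>_\<alpha> are its images, i.e. projections of
  its Borel graph.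
\<close>

instance trm :: countable
  by countable_datatype

lemma pred_countable_Ball:
  assumes "countable X" and "\<And>i. i \<in> X \<Longrightarrow> Measurable.pred N (P i)"
  shows "Measurable.pred N (\<lambda>\<omega>. \<forall>i\<in>X. P i \<omega>)"
  using assms by (auto simp: pred_def intro!: sets.sets_Collect_countable_All')

lemma pred_countable_Bex:
  assumes "countable X" and "\<And>i. i \<in> X \<Longrightarrow> Measurable.pred N (P i)"
  shows "Measurable.pred N (\<lambda>\<omega>. \<exists>i\<in>X. P i \<omega>)"
  using assms by (auto simp: pred_def intro!: sets.sets_Collect_countable_Ex')

lemma pred_set_subset:
  assumes "\<And>n. Measurable.pred N (\<lambda>\<omega>. n \<in> U \<omega>)"
  shows "Measurable.pred N (\<lambda>\<omega>. set b \<subseteq> U \<omega>)"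
  unfolding subset_eq by (intro pred_countable_Ball assms countable_finite) simp

lemma measurable_map_list:
  assumes "\<And>t. t \<in> set ts \<Longrightarrow> g t \<in> M \<rightarrow>\<^sub>M count_space (UNIV :: 'a::countable set)"
  shows "(\<lambda>\<omega>. map (\<lambda>t. g t \<omega>) ts) \<in> M \<rightarrow>\<^sub>M count_space UNIV"
  using assms
proof (induction ts)
  case (Cons t ts)
  then have "(\<lambda>\<omega>. map (\<lambda>t. g t \<omega>) ts) \<in> M \<rightarrow>\<^sub>M count_space UNIV"
    by simp
  then have "(\<lambda>\<omega>. x # map (\<lambda>t. g t \<omega>) ts) \<in> M \<rightarrow>\<^sub>M count_space UNIV" for x
    by (rule measurable_compose) simp
  then have "(\<lambda>\<omega>. (\<lambda>x \<omega>. x # map (\<lambda>t. g t \<omega>) ts) (g t \<omega>) \<omega>) \<in> M \<rightarrow>\<^sub>M count_space UNIV"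
    using Cons.prems by (rule measurable_compose_countable) simp
  then show ?case
    by simp
qed simp

lemma measurable_powerset_sigma:
  assumes "f \<in> space M \<rightarrow> Pow I" and "\<And>i. i \<in> I \<Longrightarrow> Measurable.pred M (\<lambda>\<omega>. i \<in> f \<omega>)"
  shows "f \<in> M \<rightarrow>\<^sub>M sigma (Pow I) {{S \<in> Pow I. i \<in> S} |i. i \<in> I}"
proof (rule measurable_measure_of)
  fix Y assume "Y \<in> {{S \<in> Pow I. i \<in> S} |i. i \<in> I}"
  then obtain i where "i \<in> I" and "Y = {S \<in> Pow I. i \<in> S}"
    by blast
  then have "f -` Y \<inter> space M = {\<omega> \<in> space M. i \<in> f \<omega>}"
    using assms(1) by auto
  then show "f -` Y \<inter> space M \<in> sets M"
    using assms(2)[OF \<open>i \<in> I\<close>] by (simp add: pred_def)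
qed (use assms(1) in auto)

text \<open>
  Formulas form an uncountable type, so a map into them is not asked to be measurable for the
  discrete \<sigma>-algebra; the induction only needs, and preserves, measurability of every fibre.
\<close>

definition measurable_fibres :: "'m measure \<Rightarrow> ('m \<Rightarrow> 'b) \<Rightarrow> bool" where
  "measurable_fibres N g \<longleftrightarrow> (\<forall>c. Measurable.pred N (\<lambda>\<omega>. g \<omega> = c))"

lemma measurable_fibres_inj_comp:
  assumes "inj h" and "measurable_fibres N g"
  shows "measurable_fibres N (\<lambda>\<omega>. h (g \<omega>))"
  unfolding measurable_fibres_def
proof
  fix c
  show "Measurable.pred N (\<lambda>\<omega>. h (g \<omega>) = c)"
  proof (cases "c \<in> range h")
    case True
    then have "h (g \<omega>) = c \<longleftrightarrow> g \<omega> = inv h c" for \<omega>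
      by (auto simp: f_inv_into_f inv_f_f[OF assms(1)] dest: injD[OF assms(1)])
    then show ?thesis
      using assms(2) by (simp add: measurable_fibres_def)
  next
    case False
    then have "h (g \<omega>) \<noteq> c" for \<omega>
      by auto
    then show ?thesis
      by simp
  qed
qed

lemma measurable_fibres_acset:
  assumes "measurable_fibres N G" and "\<And>\<omega>. countable (G \<omega>)"
  shows "measurable_fibres N (\<lambda>\<omega>. acset (G \<omega>))"
  unfolding measurable_fibres_def
proof
  fix c
  have "acset (G \<omega>) = c \<longleftrightarrow> G \<omega> = rcset c" for \<omega>
    using assms(2) by (auto simp: acset_inverse rcset_inverse)
  then show "Measurable.pred N (\<lambda>\<omega>. acset (G \<omega>) = c)"
    using assms(1) by (simp add: measurable_fibres_def)
qed

text \<open>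
  A countable set of values can only equal a countable T, and then the equation is a countable
  Boolean combination of fibre conditions.
\<close>

lemma measurable_fibres_image:
  assumes I: "countable I"
    and g: "\<And>i. i \<in> I \<Longrightarrow> measurable_fibres N (g i)"
    and P: "\<And>i. i \<in> I \<Longrightarrow> Measurable.pred N (P i)"
  shows "measurable_fibres N (\<lambda>\<omega>. (\<lambda>i. g i \<omega>) ` {i \<in> I. P i \<omega>})"
  unfolding measurable_fibres_def
proof
  fix T
  show "Measurable.pred N (\<lambda>\<omega>. (\<lambda>i. g i \<omega>) ` {i \<in> I. P i \<omega>} = T)"
  proof (cases "countable T")
    case True
    have "(\<lambda>i. g i \<omega>) ` {i \<in> I. P i \<omega>} = T \<longleftrightarrow>
        (\<forall>i\<in>I. P i \<omega> \<longrightarrow> (\<exists>t\<in>T. g i \<omega> = t)) \<and> (\<forall>t\<in>T. \<exists>i\<in>I. P i \<omega> \<and> g i \<omega> = t)" for \<omega>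
      by (auto simp: image_iff)
    moreover have "Measurable.pred N (\<lambda>\<omega>.
        (\<forall>i\<in>I. P i \<omega> \<longrightarrow> (\<exists>t\<in>T. g i \<omega> = t)) \<and> (\<forall>t\<in>T. \<exists>i\<in>I. P i \<omega> \<and> g i \<omega> = t))"
      using I True g P unfolding measurable_fibres_def
      by (intro pred_intros_logic pred_countable_Ball pred_countable_Bex) auto
    ultimately show ?thesis
      by simp
  next
    case False
    then have "(\<lambda>i. g i \<omega>) ` {i \<in> I. P i \<omega>} \<noteq> T" for \<omega>
      using I by auto
    then show ?thesis
      by simp
  qed
qed

lemma measurable_fibres_image_UNIV:
  fixes g :: "'i::countable \<Rightarrow> 'm \<Rightarrow> 'b"
  assumes "\<And>i. measurable_fibres N (g i)" and "\<And>i. Measurable.pred N (P i)"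
  shows "measurable_fibres N (\<lambda>\<omega>. (\<lambda>i. g i \<omega>) ` {i. P i \<omega>})"
  using measurable_fibres_image[of UNIV N g P] assms by simp

lemma measurable_fibres_FConj:
  assumes "measurable_fibres N G" and "\<And>\<omega>. countable (G \<omega>)"
  shows "measurable_fibres N (\<lambda>\<omega>. FConj (acset (G \<omega>)))"
  using measurable_fibres_inj_comp[of FConj N "\<lambda>\<omega>. acset (G \<omega>)"] measurable_fibres_acset[OF assms]
  by (simp add: inj_def)

lemma measurable_fibres_FDisj:
  assumes "measurable_fibres N G" and "\<And>\<omega>. countable (G \<omega>)"
  shows "measurable_fibres N (\<lambda>\<omega>. FDisj (acset (G \<omega>)))"
  using measurable_fibres_inj_comp[of FDisj N "\<lambda>\<omega>. acset (G \<omega>)"] measurable_fibres_acset[OF assms]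
  by (simp add: inj_def)

lemma inj_Exs: "inj (Exs k m)"
  by (induction m arbitrary: k) (simp_all add: inj_def)

lemma inj_Alls: "inj (Alls k m)"
  by (induction m arbitrary: k) (simp_all add: inj_def)

lemma phiF_cong:
  assumes "\<And>z. z \<in> below r y \<Longrightarrow> f z = g z"
  shows "phiF L r f y = phiF L r g y"
proof -
  have "(SOME z. is_ipred r y z) \<in> below r y" if "\<exists>z. is_ipred r y z"
    using that by (metis is_ipred_def someI)
  then show ?thesis
    using assms unfolding phiF_def by (auto simp: setcompr_eq_image intro!: ext image_cong)
qed

lemma phi_type_unfold:
  assumes "Well_order r"
  shows "phi_type L r y = phiF L r (phi_type L r) y"
proof -
  have "wf (r - Id)"
    using assms by (simp add: well_order_on_def)
  then have "phi_type L r y = phiF L r (cut (phi_type L r) (r - Id) y) y"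
    unfolding phi_type_def by (rule wfrec)
  also have "\<dots> = phiF L r (phi_type L r) y"
    by (rule phiF_cong) (auto simp: below_def cut_apply)
  finally show ?thesis .
qed

lemma phi_type_zero:
  "Well_order r \<Longrightarrow> below r y = {} \<Longrightarrow> phi_type L r y M a = FConj (acset (atoms_true L M a))"
  by (subst phi_type_unfold) (simp_all add: phiF_def)

lemma phi_type_succ:
  assumes "Well_order r" and "\<exists>z. is_ipred r y z"
  shows "phi_type L r y M a = succ_form (phi_type L r (SOME z. is_ipred r y z)) M a"
proof -
  have "below r y \<noteq> {}"
    using assms(2) unfolding is_ipred_def by blast
  then show ?thesis
    by (subst phi_type_unfold[OF assms(1)]) (simp add: phiF_def assms(2))
qed

lemma phi_type_limit:
  "Well_order r \<Longrightarrow> below r y \<noteq> {} \<Longrightarrow> \<not> (\<exists>z. is_ipred r y z) \<Longrightarrow>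
    phi_type L r y M a = FConj (acset ((\<lambda>z. phi_type L r z M a) ` below r y))"
  by (subst phi_type_unfold) (auto simp: phiF_def setcompr_eq_image)

lemma countable_Atoms: "countable (Atoms L)"
proof -
  have "atomic_L L \<subseteq> case_prod FEq ` UNIV \<union> case_prod FRel ` UNIV"
    unfolding atomic_L_def by auto
  then have "countable (atomic_L L)"
    by (rule countable_subset) auto
  then show ?thesis
    unfolding Atoms_def by auto
qed

locale measurable_struc_family =
  fixes L :: lang and N :: "'m measure" and S :: "'m \<Rightarrow> struc"
  assumes pred_sat_atom: "\<And>q a. q \<in> Atoms L \<Longrightarrow> fv q \<subseteq> {..<length a} \<Longrightarrow>
      Measurable.pred N (\<lambda>\<omega>. sat_tuple (S \<omega>) q a)"
    and pred_mem_univ: "\<And>n. Measurable.pred N (\<lambda>\<omega>. n \<in> univ (S \<omega>))"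
begin

lemma measurable_fibres_atoms_true:
  "measurable_fibres N (\<lambda>\<omega>. FConj (acset (atoms_true L (S \<omega>) a)))"
proof (rule measurable_fibres_FConj)
  have "measurable_fibres N (\<lambda>\<omega>. (\<lambda>q. q) ` {q \<in> Atoms L. fv q \<subseteq> {..<length a} \<and> sat_tuple (S \<omega>) q a})"
    using countable_Atoms pred_sat_atom by (intro measurable_fibres_image) (auto simp: measurable_fibres_def)
  then show "measurable_fibres N (\<lambda>\<omega>. atoms_true L (S \<omega>) a)"
    by (simp add: atoms_true_def)
  show "countable (atoms_true L (S \<omega>) a)" for \<omega>
    using countable_Atoms by (simp add: atoms_true_def)
qed

lemma measurable_fibres_succ_form:
  assumes q: "\<And>a. measurable_fibres N (\<lambda>\<omega>. q (S \<omega>) a)"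
  shows "measurable_fibres N (\<lambda>\<omega>. succ_form q (S \<omega>) a)"
proof -
  define ex where "ex \<omega> = FConj (acset ((\<lambda>b. Exs (length a) (length b) (q (S \<omega>) (a @ b)))
      ` {b. set b \<subseteq> univ (S \<omega>)}))" for \<omega>
  define disj where "disj n \<omega> = FDisj (acset ((\<lambda>b. q (S \<omega>) (a @ b))
      ` {b. length b = Suc n \<and> set b \<subseteq> univ (S \<omega>)}))" for n \<omega>
  define all where "all \<omega> = FConj (acset ((\<lambda>n. Alls (length a) (Suc n) (disj n \<omega>)) ` {n. True}))" for \<omega>
  have "measurable_fibres N ex"
    unfolding ex_def using q pred_set_subset[OF pred_mem_univ]
    by (intro measurable_fibres_FConj measurable_fibres_image_UNIV
        measurable_fibres_inj_comp[OF inj_Exs]) auto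
  moreover have "measurable_fibres N (disj n)" for n
    unfolding disj_def using q pred_set_subset[OF pred_mem_univ]
    by (intro measurable_fibres_FDisj measurable_fibres_image_UNIV pred_intros_logic) auto
  then have "measurable_fibres N all"
    unfolding all_def
    by (intro measurable_fibres_FConj measurable_fibres_image_UNIV
        measurable_fibres_inj_comp[OF inj_Alls]) auto
  ultimately have "measurable_fibres N (\<lambda>\<omega>. (\<lambda>f. f \<omega>) ` {f \<in> {\<lambda>\<omega>. q (S \<omega>) a, ex, all}. True})"
    using q by (intro measurable_fibres_image) auto
  then have "measurable_fibres N (\<lambda>\<omega>. (\<lambda>f. f \<omega>) ` {\<lambda>\<omega>. q (S \<omega>) a, ex, all})"
    by (simp only: simp_thms Collect_mem_eq)
  then have "measurable_fibres N (\<lambda>\<omega>. FConj (acset ((\<lambda>f. f \<omega>) ` {\<lambda>\<omega>. q (S \<omega>) a, ex, all})))"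
    by (rule measurable_fibres_FConj) simp
  moreover have "succ_form q (S \<omega>) a
      = FConj (acset ((\<lambda>f. f \<omega>) ` {\<lambda>\<omega>. q (S \<omega>) a, ex, all}))" for \<omega>
    by (simp add: succ_form_def setcompr_eq_image ex_def all_def disj_def)
  ultimately show ?thesis
    by simp
qed

lemma measurable_fibres_phi_type:
  assumes WO: "Well_order r"
  shows "measurable_fibres N (\<lambda>\<omega>. phi_type L r y (S \<omega>) a)"
proof -
  have "wf (r - Id)"
    using WO by (simp add: well_order_on_def)
  then show ?thesis
  proof (induction y arbitrary: a rule: wf_induct_rule)
    case (less y)
    then have IH: "\<And>z a. z \<in> below r y \<Longrightarrow> measurable_fibres N (\<lambda>\<omega>. phi_type L r z (S \<omega>) a)"
      by (auto simp: below_def)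
    consider (zero) "below r y = {}" | (succ) "\<exists>z. is_ipred r y z"
      | (limit) "below r y \<noteq> {}" "\<not> (\<exists>z. is_ipred r y z)"
      by blast
    then show ?case
    proof cases
      case zero
      then show ?thesis
        using measurable_fibres_atoms_true by (simp add: phi_type_zero[OF WO])
    next
      case succ
      then have "(SOME z. is_ipred r y z) \<in> below r y"
        by (metis is_ipred_def someI)
      then show ?thesis
        using succ IH by (simp add: phi_type_succ[OF WO] measurable_fibres_succ_form)
    next
      case limit
      have "measurable_fibres N (\<lambda>\<omega>. (\<lambda>z. phi_type L r z (S \<omega>) a) ` {z \<in> below r y. True})"
        using IH by (intro measurable_fibres_image) auto
      then show ?thesis
        using limit by (simp add: phi_type_limit[OF WO] measurable_fibres_FConj)
    qed
  qed
qed

lemma pred_mem_code: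
  assumes WO: "Well_order r"
  shows "Measurable.pred N (\<lambda>\<omega>. \<psi> \<in> code L r y (S \<omega>) a)"
proof -
  note fibres = measurable_fibres_phi_type[OF WO, unfolded measurable_fibres_def, rule_format]
  consider (zero) "below r y = {}" | (succ) "below r y \<noteq> {}" "\<exists>z. is_ipred r y z"
    | (limit) "below r y \<noteq> {}" "\<not> (\<exists>z. is_ipred r y z)"
    by blast
  then show ?thesis
  proof cases
    case zero
    then show ?thesis
      using pred_sat_atom by (cases "\<psi> \<in> Atoms L \<and> fv \<psi> \<subseteq> {..<length a}") (auto simp: code_def atoms_true_def)
  next
    case succ
    then have "\<psi> \<in> code L r y (S \<omega>) a \<longleftrightarrow>
        (\<exists>b. set b \<subseteq> univ (S \<omega>) \<and> phi_type L r (SOME z. is_ipred r y z) (S \<omega>) (a @ b) = \<psi>)" for \<omega>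
      by (auto simp: code_def)
    then show ?thesis
      using pred_set_subset[OF pred_mem_univ] fibres by (simp add: pred_intros_countable pred_intros_logic)
  next
    case limit
    then have "\<psi> \<in> code L r y (S \<omega>) a \<longleftrightarrow> (\<exists>z\<in>below r y. phi_type L r z (S \<omega>) a = \<psi>)" for \<omega>
      by (auto simp: code_def)
    then show ?thesis
      using fibres by (simp add: pred_intros_countable_bounded)
  qed
qed

end

lemma code_subset_Xindex:
  assumes "is_struc L M" and "sat M p (\<lambda>_. 0)" and "set a \<subseteq> univ M"
  shows "code L r y M a \<subseteq> Xindex L r y p"
proof -
  have "(SOME z. is_ipred r y z) \<in> below r y" if "\<exists>z. is_ipred r y z"
    using that by (metis is_ipred_def someI)
  moreover have "phi_type L r z M (a @ b) \<in> Psi L r z p" if "set b \<subseteq> univ M" for z b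
    using assms that unfolding Psi_def by fastforce
  moreover have "phi_type L r z M a \<in> Psi L r z p" for z
    using assms unfolding Psi_def by fastforce
  ultimately show ?thesis
    by (auto simp: code_def Xindex_def atoms_true_def)
qed

lemma countable_Xindex:
  assumes "\<forall>y\<in>below r x. countable (Psi L r y p)"
  shows "countable (Xindex L r x p)"
proof -
  have "(SOME z. is_ipred r x z) \<in> below r x" if "\<exists>z. is_ipred r x z"
    using that by (metis is_ipred_def someI)
  then show ?thesis
    using assms countable_Atoms by (auto simp: Xindex_def)
qed

lemma space_Mod_phi_M: "space (Mod_phi_M L p) = Mod_phi L p"
proof -
  have "space (ModL_M L) = ModL L"
    unfolding ModL_M_def by (rule space_measure_of) (auto simp: basic_open_def)
  then show ?thesis
    by (auto simp: Mod_phi_M_def space_restrict_space Mod_phi_def)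
qed

lemma measurable_struc_family_Mod_phi: "measurable_struc_family L (Mod_phi_M L p) (\<lambda>M. M)"
proof
  fix q and a :: "nat list"
  assume q: "q \<in> Atoms L" "fv q \<subseteq> {..<length a}"
  then have "{M \<in> ModL L. sat_tuple M q a} \<in> basic_open L"
    unfolding basic_open_def Atoms_def atomic_L_def by fastforce
  then have "{M \<in> ModL L. sat_tuple M q a} \<in> sets (ModL_M L)"
    unfolding ModL_M_def by (subst sets_measure_of) (auto simp: basic_open_def intro: sigma_sets.Basic)
  then have "Mod_phi L p \<inter> {M \<in> ModL L. sat_tuple M q a} \<in> sets (Mod_phi_M L p)"
    unfolding Mod_phi_M_def sets_restrict_space by blast
  moreover have "Mod_phi L p \<inter> {M \<in> ModL L. sat_tuple M q a} = {M \<in> space (Mod_phi_M L p). sat_tuple M q a}"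
    by (auto simp: space_Mod_phi_M Mod_phi_def)
  ultimately show "Measurable.pred (Mod_phi_M L p) (\<lambda>M. sat_tuple M q a)"
    by (simp add: pred_def)
next
  fix n
  have "{M \<in> space (Mod_phi_M L p). n \<in> univ M} = space (Mod_phi_M L p)"
    by (auto simp: space_Mod_phi_M Mod_phi_def ModL_def)
  then show "Measurable.pred (Mod_phi_M L p) (\<lambda>M. n \<in> univ M)"
    by (simp add: pred_def)
qed

lemma measurable_code:
  assumes "Well_order r"
  shows "(\<lambda>(M, a). code L r x M a) \<in> Mod_phi_M L p \<Otimes>\<^sub>M count_space UNIV \<rightarrow>\<^sub>M Xspace L r x p"
  unfolding Xspace_def
proof (rule measurable_powerset_sigma)
  show "(\<lambda>(M, a). code L r x M a) \<in> space (Mod_phi_M L p \<Otimes>\<^sub>M count_space UNIV) \<rightarrow> Pow (Xindex L r x p)"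
    using code_subset_Xindex by (fastforce simp: space_pair_measure space_Mod_phi_M Mod_phi_def ModL_def)
  fix \<psi>
  note pred_mem_code = measurable_struc_family.pred_mem_code[OF measurable_struc_family_Mod_phi assms]
  have "Measurable.pred (Mod_phi_M L p \<Otimes>\<^sub>M count_space UNIV) (\<lambda>\<omega>. \<psi> \<in> code L r x (fst \<omega>) (snd \<omega>))"
    by (rule measurable_compose_countable[OF measurable_compose[OF measurable_fst pred_mem_code] measurable_snd])
  then show "Measurable.pred (Mod_phi_M L p \<Otimes>\<^sub>M count_space UNIV) (\<lambda>\<omega>. \<psi> \<in> (case \<omega> of (M, a) \<Rightarrow> code L r x M a))"
    by (simp add: case_prod_beta)
qed

section \<open>Coding structures by points of Baire space\<close>

text \<open>
  A point z codes the tuple z 0, the universe {n. z \<langle>1, n\<rangle> \<noteq> 0} and the interpretations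
  of the function and relation symbols f, R at xs in the coordinates \<langle>2, \<langle>f, xs\<rangle>\<rangle> and
  \<langle>3, \<langle>R, xs\<rangle>\<rangle>.
\<close>

definition baire_tuple :: "(nat \<Rightarrow> nat) \<Rightarrow> nat list" where
  "baire_tuple z = from_nat (z 0)"

definition baire_univ :: "(nat \<Rightarrow> nat) \<Rightarrow> nat set" where
  "baire_univ z = {n. z (prod_encode (1, n)) \<noteq> 0}"

definition fun_coord :: "nat \<Rightarrow> nat list \<Rightarrow> nat" where
  "fun_coord f xs = prod_encode (2, to_nat (f, xs))"

definition rel_coord :: "nat \<Rightarrow> nat list \<Rightarrow> nat" where
  "rel_coord R xs = prod_encode (3, to_nat (R, xs))"

definition baire_struc :: "lang \<Rightarrow> (nat \<Rightarrow> nat) \<Rightarrow> struc" where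
  "baire_struc L z = \<lparr>univ = baire_univ z,
     fint = (\<lambda>f xs. if fsym L f = Some (length xs) \<and> set xs \<subseteq> baire_univ z then z (fun_coord f xs) else 0),
     rint = (\<lambda>R xs. rsym L R = Some (length xs) \<and> set xs \<subseteq> baire_univ z \<and> z (rel_coord R xs) \<noteq> 0)\<rparr>"

definition baire_point :: "struc \<Rightarrow> nat list \<Rightarrow> nat \<Rightarrow> nat" where
  "baire_point M a k = (if k = 0 then to_nat a else
     (case prod_decode k of (t, m) \<Rightarrow>
        if t = 1 then of_bool (m \<in> univ M)
        else if t = 2 then case_prod (fint M) (from_nat m)
        else if t = 3 then of_bool (case_prod (rint M) (from_nat m))
        else 0))"

lemma space_baire: "space baire = UNIV"
  unfolding baire_def space_PiM by auto

lemma measurable_baire_coord: "(\<lambda>z. z k) \<in> baire \<rightarrow>\<^sub>M count_space UNIV"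
  unfolding baire_def by (rule measurable_component_singleton) simp

lemma measurable_baire_tuple: "baire_tuple \<in> baire \<rightarrow>\<^sub>M count_space UNIV"
  unfolding baire_tuple_def[abs_def] by (rule measurable_compose[OF measurable_baire_coord]) simp

lemma univ_baire_struc [simp]: "univ (baire_struc L z) = baire_univ z"
  by (simp add: baire_struc_def)

lemma fint_baire_struc [simp]:
  "fint (baire_struc L z) f xs
    = (if fsym L f = Some (length xs) \<and> set xs \<subseteq> baire_univ z then z (fun_coord f xs) else 0)"
  unfolding baire_struc_def by simp

lemma rint_baire_struc [simp]:
  "rint (baire_struc L z) R xs
    \<longleftrightarrow> rsym L R = Some (length xs) \<and> set xs \<subseteq> baire_univ z \<and> z (rel_coord R xs) \<noteq> 0"
  unfolding baire_struc_def by simp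

lemma pred_mem_baire_univ: "Measurable.pred baire (\<lambda>z. n \<in> baire_univ z)"
  unfolding baire_univ_def mem_Collect_eq
  by (intro pred_intros_logic pred_count_space_const1 measurable_baire_coord)

lemma measurable_eval_baire: "(\<lambda>z. eval (baire_struc L z) v t) \<in> baire \<rightarrow>\<^sub>M count_space UNIV"
proof (induction t)
  case (App f ts)
  let ?F = "\<lambda>xs z. if fsym L f = Some (length xs) \<and> set xs \<subseteq> baire_univ z then z (fun_coord f xs) else 0"
  have "Measurable.pred baire (\<lambda>z. fsym L f = Some (length xs) \<and> set xs \<subseteq> baire_univ z)" for xs
    by (intro pred_intros_logic pred_set_subset pred_mem_baire_univ) simp
  then have "?F xs \<in> baire \<rightarrow>\<^sub>M count_space UNIV" for xs
    by (intro measurable_If measurable_baire_coord) (simp_all add: pred_def)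
  moreover have "(\<lambda>z. map (\<lambda>t. eval (baire_struc L z) v t) ts) \<in> baire \<rightarrow>\<^sub>M count_space UNIV"
    using App by (rule measurable_map_list)
  ultimately have "(\<lambda>z. ?F (map (\<lambda>t. eval (baire_struc L z) v t) ts) z) \<in> baire \<rightarrow>\<^sub>M count_space UNIV"
    by (rule measurable_compose_countable)
  then show ?case
    by simp
qed simp

lemma pred_sat_baire: "Measurable.pred baire (\<lambda>z. sat (baire_struc L z) q v)"
proof (induction q arbitrary: v)
  case (FEq s t)
  show ?case
    by (simp, rule measurable_compose_countable[OF pred_count_space_const2 measurable_eval_baire])
      (rule measurable_eval_baire)
next
  case (FRel R ts)
  let ?F = "\<lambda>xs z. rsym L R = Some (length xs) \<and> set xs \<subseteq> baire_univ z \<and> z (rel_coord R xs) \<noteq> 0"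
  have "Measurable.pred baire (?F xs)" for xs
    by (intro pred_intros_logic pred_set_subset pred_mem_baire_univ pred_count_space_const1
        measurable_baire_coord) simp
  moreover have "(\<lambda>z. map (\<lambda>t. eval (baire_struc L z) v t) ts) \<in> baire \<rightarrow>\<^sub>M count_space UNIV"
    by (rule measurable_map_list) (rule measurable_eval_baire)
  ultimately have "Measurable.pred baire (\<lambda>z. ?F (map (\<lambda>t. eval (baire_struc L z) v t) ts) z)"
    by (rule measurable_compose_countable)
  then show ?case
    by simp
next
  case (FNeg q)
  then show ?case
    by (simp add: pred_intros_logic)
next
  case (FConj Q)
  then show ?case
    by (simp add: cimage.rep_eq pred_countable_Ball)
next
  case (FDisj Q)
  then show ?case
    by (simp add: cimage.rep_eq pred_countable_Bex)
next
  case (FEx i q)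
  then show ?case
    by (simp add: Bex_def) (intro pred_intros_countable pred_intros_logic pred_mem_baire_univ FEx.IH)
next
  case (FAll i q)
  then show ?case
    by (simp add: Ball_def) (intro pred_intros_countable pred_intros_logic pred_mem_baire_univ FAll.IH)
qed

lemma pred_is_struc_baire: "Measurable.pred baire (\<lambda>z. is_struc L (baire_struc L z))"
proof -
  have "is_struc L (baire_struc L z) \<longleftrightarrow> (\<exists>n. n \<in> baire_univ z) \<and> (\<forall>f xs.
      fsym L f = Some (length xs) \<and> set xs \<subseteq> baire_univ z \<longrightarrow> z (fun_coord f xs) \<in> baire_univ z)" for z
    by (auto simp: is_struc_def)
  moreover have "Measurable.pred baire (\<lambda>z. z (fun_coord f xs) \<in> baire_univ z)" for f xs
    by (rule measurable_compose_countable[OF pred_mem_baire_univ measurable_baire_coord])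
  ultimately show ?thesis
    by (simp only:) (intro pred_intros_countable pred_intros_logic pred_set_subset pred_mem_baire_univ; simp)
qed

lemma measurable_struc_family_baire: "measurable_struc_family L baire (baire_struc L)"
  by unfold_locales (simp_all add: sat_tuple_def pred_sat_baire pred_mem_baire_univ)

lemma prod_encode_nonzero: "t \<noteq> 0 \<Longrightarrow> prod_encode (t, m) \<noteq> 0"
  by (simp add: prod_encode_def)

lemma baire_univ_point: "baire_univ (baire_point M a) = univ M"
  by (auto simp: baire_univ_def baire_point_def prod_encode_nonzero prod_encode_inverse)

lemma baire_tuple_point: "baire_tuple (baire_point M a) = a"
  by (simp add: baire_tuple_def baire_point_def)

lemma baire_struc_point:
  assumes "is_struc L M"
  shows "baire_struc L (baire_point M a) = M"
proof (rule struc.equality)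
  show "fint (baire_struc L (baire_point M a)) = fint M"
  proof (intro ext)
    fix f xs
    have "fint (baire_struc L (baire_point M a)) f xs
        = (if fsym L f = Some (length xs) \<and> set xs \<subseteq> univ M then fint M f xs else 0)"
      by (simp add: baire_univ_point baire_point_def fun_coord_def prod_encode_nonzero prod_encode_inverse)
    then show "fint (baire_struc L (baire_point M a)) f xs = fint M f xs"
      using assms unfolding is_struc_def by auto
  qed
  show "rint (baire_struc L (baire_point M a)) = rint M"
  proof (intro ext)
    fix R xs
    have "rint (baire_struc L (baire_point M a)) R xs
        \<longleftrightarrow> rsym L R = Some (length xs) \<and> set xs \<subseteq> univ M \<and> rint M R xs"
      by (simp add: baire_univ_point baire_point_def rel_coord_def prod_encode_nonzero prod_encode_inverse)
    then show "rint (baire_struc L (baire_point M a)) R xs = rint M R xs"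
      using assms unfolding is_struc_def by blast
  qed
qed (simp_all add: baire_univ_point baire_struc_def)

definition baire_models :: "lang \<Rightarrow> form \<Rightarrow> (nat \<Rightarrow> nat) set" where
  "baire_models L p = {z. is_struc L (baire_struc L z) \<and> sat (baire_struc L z) p (\<lambda>_. 0)
      \<and> set (baire_tuple z) \<subseteq> baire_univ z}"

lemma sets_baire_models: "baire_models L p \<in> sets baire"
proof -
  have "Measurable.pred baire (\<lambda>z. is_struc L (baire_struc L z) \<and> sat (baire_struc L z) p (\<lambda>_. 0)
      \<and> set (baire_tuple z) \<subseteq> baire_univ z)"
    using pred_is_struc_baire pred_sat_baire
      measurable_compose_countable[OF pred_set_subset[OF pred_mem_baire_univ] measurable_baire_tuple]
    by (intro pred_intros_logic) auto
  then show ?thesis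
    by (simp add: pred_def space_baire baire_models_def)
qed

lemma analytic_image:
  assumes I: "countable I" and D: "D \<in> sets baire" and f: "\<And>z. z \<in> D \<Longrightarrow> f z \<subseteq> I"
    and mem_f: "\<And>i. i \<in> I \<Longrightarrow> Measurable.pred baire (\<lambda>z. i \<in> f z)"
  shows "analytic (sigma (Pow I) {{S \<in> Pow I. i \<in> S} |i. i \<in> I}) (f ` D)"
proof -
  let ?X = "sigma (Pow I) {{S \<in> Pow I. i \<in> S} |i. i \<in> I}"
  have space_X: "space ?X = Pow I"
    by (rule space_measure_of) auto
  have mem_X: "Measurable.pred ?X (\<lambda>S. i \<in> S)" if "i \<in> I" for i
  proof -
    have "{S \<in> Pow I. i \<in> S} \<in> sets ?X"
      using that by (subst sets_measure_of) (auto intro: sigma_sets.Basic)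
    then show ?thesis
      unfolding pred_def space_X .
  qed
  have mem_D: "Measurable.pred baire (\<lambda>z. z \<in> D)"
    using D by (simp add: pred_def space_baire)
  define graph where "graph = {(S, z). S \<subseteq> I \<and> z \<in> D \<and> (\<forall>i\<in>I. i \<in> S \<longleftrightarrow> i \<in> f z)}"
  have "graph = {w \<in> space (?X \<Otimes>\<^sub>M baire). snd w \<in> D \<and> (\<forall>i\<in>I. i \<in> fst w \<longleftrightarrow> i \<in> f (snd w))}"
    unfolding graph_def space_pair_measure space_X space_baire by auto
  also have "\<dots> \<in> sets (?X \<Otimes>\<^sub>M baire)"
    unfolding pred_def[symmetric] using I mem_X mem_f mem_D
    by (intro pred_intros_logic pred_countable_Ball measurable_compose[OF measurable_fst]
        measurable_compose[OF measurable_snd]) auto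
  finally have "graph \<in> sets (?X \<Otimes>\<^sub>M baire)" .
  moreover have "fst ` graph = f ` D"
  proof -
    have "graph = (\<lambda>z. (f z, z)) ` D"
    proof (intro equalityI subsetI)
      fix w assume "w \<in> graph"
      then obtain S z where "w = (S, z)" "z \<in> D" "S \<subseteq> I" "\<forall>i\<in>I. i \<in> S \<longleftrightarrow> i \<in> f z"
        unfolding graph_def by auto
      moreover from this have "S = f z"
        using f by blast
      ultimately show "w \<in> (\<lambda>z. (f z, z)) ` D"
        by blast
    qed (use f in \<open>auto simp: graph_def\<close>)
    then show ?thesis
      by (simp add: image_image)
  qed
  moreover have "f ` D \<subseteq> space ?X"
    using f space_X by auto
  ultimately show ?thesis
    unfolding analytic_def by blast
qed

lemma analytic_code_image:
  assumes WO: "Well_order r" and C: "\<forall>y\<in>below r x. countable (Psi L r y p)"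
    and D: "D \<in> sets baire" "D \<subseteq> baire_models L p"
  shows "analytic (Xspace L r x p) ((\<lambda>z. code L r x (baire_struc L z) (baire_tuple z)) ` D)"
  unfolding Xspace_def
proof (rule analytic_image[OF countable_Xindex[OF C] D(1)])
  show "code L r x (baire_struc L z) (baire_tuple z) \<subseteq> Xindex L r x p" if "z \<in> D" for z
  proof -
    have "z \<in> baire_models L p"
      using that D(2) by blast
    then show ?thesis
      unfolding baire_models_def by (intro code_subset_Xindex) auto
  qed
  show "Measurable.pred baire (\<lambda>z. \<psi> \<in> code L r x (baire_struc L z) (baire_tuple z))" for \<psi>
    by (rule measurable_compose_countable[OF
          measurable_struc_family.pred_mem_code[OF measurable_struc_family_baire WO] measurable_baire_tuple])
qed

lemma PsiX_eq_code_image: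
  "PsiX L r x p = (\<lambda>z. code L r x (baire_struc L z) (baire_tuple z)) ` baire_models L p"
proof
  show "PsiX L r x p \<subseteq> (\<lambda>z. code L r x (baire_struc L z) (baire_tuple z)) ` baire_models L p"
  proof
    fix c assume "c \<in> PsiX L r x p"
    then obtain M a where "c = code L r x M a" "is_struc L M" "sat M p (\<lambda>_. 0)" "set a \<subseteq> univ M"
      unfolding PsiX_def by blast
    then show "c \<in> (\<lambda>z. code L r x (baire_struc L z) (baire_tuple z)) ` baire_models L p"
      by (intro image_eqI[where x="baire_point M a"])
        (simp_all add: baire_models_def baire_struc_point baire_tuple_point baire_univ_point)
  qed
qed (force simp: PsiX_def baire_models_def)

lemma PhiX_eq_code_image:
  "PhiX L r x p = (\<lambda>z. code L r x (baire_struc L z) (baire_tuple z))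
      ` {z \<in> baire_models L p. baire_tuple z = []}"
proof
  show "PhiX L r x p \<subseteq> (\<lambda>z. code L r x (baire_struc L z) (baire_tuple z))
      ` {z \<in> baire_models L p. baire_tuple z = []}"
  proof
    fix c assume "c \<in> PhiX L r x p"
    then obtain M where "c = code L r x M []" "is_struc L M" "sat M p (\<lambda>_. 0)"
      unfolding PhiX_def by blast
    then show "c \<in> (\<lambda>z. code L r x (baire_struc L z) (baire_tuple z))
        ` {z \<in> baire_models L p. baire_tuple z = []}"
      by (intro image_eqI[where x="baire_point M []"])
        (simp_all add: baire_models_def baire_struc_point baire_tuple_point baire_univ_point)
  qed
qed (force simp: PhiX_def baire_models_def)

theorem lemma13:
  fixes L :: lang and p :: form and r :: "nat rel" and x :: nat
  assumes "is_sentence L p"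
    and "Well_order r" and "x \<in> Field r"
    and "\<forall>y\<in>below r x. countable (Psi L r y p)"
  shows "(\<lambda>(M, a). code L r x M a)
           \<in> measurable (Mod_phi_M L p \<Otimes>\<^sub>M count_space (UNIV :: nat list set)) (Xspace L r x p)
         \<and> analytic (Xspace L r x p) (PsiX L r x p)
         \<and> analytic (Xspace L r x p) (PhiX L r x p)"
proof -
  have "{z \<in> baire_models L p. baire_tuple z = []} \<in> sets baire"
    using sets_baire_models pred_count_space_const1[OF measurable_baire_tuple]
    by (simp add: pred_def space_baire Collect_conj_eq)
  then show ?thesis
    using measurable_code[OF assms(2)]
      analytic_code_image[OF assms(2,4) sets_baire_models order_refl]
      analytic_code_image[OF assms(2,4), of "{z \<in> baire_models L p. baire_tuple z = []}"]
    by (auto simp: PsiX_eq_code_image PhiX_eq_code_image)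
qed

end
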